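(* Let $H:[0,1]\times\mathbb R\to\mathbb R$ be continuous, coercive in $p$, and quasiconvex in $p$ with $\mathrm{Int}\{p: H(s,p)\le b\}=\{p:H(s,p)<b\}$ for all $s,b$. Let $a_H=\max_s\min_pH(s,p)$ and let $c_H$ be the minimum of those $a\in\mathbb R$ for which $H(s,u')=a$ admits a viscosity subsolution $u$ in $(0,1)$, continuous on $[0,1]$, with $u(0)=u(1)$ (a periodic subsolution). Assume that either $c_H>a_H$, or $s\mapsto\min_pH(s,p)$ is constant on $[0,1]$. With $\sigma^\pm_{c_H}(s)$ the largest/smallest $p$ with $H(s,p)=c_H$, one has $$\min\Big\{-\int_0^1\sigma^-_{c_H}(t)\,dt,\ \int_0^1\sigma^+_{c_H}(t)\,dt\Big\}=0 .$$
   Context: Coercive: $H(s,p)\to+\infty$ as $|p|\to\infty$ uniformly in $s$; quasiconvex: convex sublevel sets in $p$. The minimum defining $c_H$ exists and $c_H\ge a_H$. *)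

theory Defs
  imports "HOL-Analysis.Analysis"
begin

definition coercive_H :: "(real \<Rightarrow> real \<Rightarrow> real) \<Rightarrow> bool" where
  "coercive_H H \<longleftrightarrow> (\<forall>M. \<exists>R. \<forall>s\<in>{0..1}. \<forall>p. \<bar>p\<bar> > R \<longrightarrow> H s p > M)"

definition quasiconvex_H :: "(real \<Rightarrow> real \<Rightarrow> real) \<Rightarrow> bool" where
  "quasiconvex_H H \<longleftrightarrow> (\<forall>s\<in>{0..1}. \<forall>b. convex {p. H s p \<le> b})"

definition visc_subsol :: "(real \<Rightarrow> real \<Rightarrow> real) \<Rightarrow> real \<Rightarrow> (real \<Rightarrow> real) \<Rightarrow> bool" where
  "visc_subsol H a u \<longleftrightarrow> continuous_on {0<..<1} u \<and>
     (\<forall>x0\<in>{0<..<1}. \<forall>\<phi> \<phi>'.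
        (\<forall>x\<in>{0<..<1}. (\<phi> has_real_derivative \<phi>' x) (at x)) \<and> continuous_on {0<..<1} \<phi>' \<and>
        (\<exists>e>0. \<forall>x\<in>{0<..<1}. \<bar>x - x0\<bar> < e \<longrightarrow> u x - \<phi> x \<le> u x0 - \<phi> x0)
        \<longrightarrow> H x0 (\<phi>' x0) \<le> a)"

definition periodic_subsol :: "(real \<Rightarrow> real \<Rightarrow> real) \<Rightarrow> real \<Rightarrow> (real \<Rightarrow> real) \<Rightarrow> bool" where
  "periodic_subsol H a u \<longleftrightarrow> continuous_on {0..1} u \<and> u 0 = u 1 \<and> visc_subsol H a u"

definition minH :: "(real \<Rightarrow> real \<Rightarrow> real) \<Rightarrow> real \<Rightarrow> real" where
  "minH H s = Inf (range (H s))"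

definition a_H :: "(real \<Rightarrow> real \<Rightarrow> real) \<Rightarrow> real" where
  "a_H H = Sup (minH H ` {0..1})"

text \<open>c_H = min of those a admitting a periodic subsolution (the minimum exists).\<close>
definition c_H :: "(real \<Rightarrow> real \<Rightarrow> real) \<Rightarrow> real" where
  "c_H H = Inf {a. \<exists>u. periodic_subsol H a u}"

definition sigma_plus :: "(real \<Rightarrow> real \<Rightarrow> real) \<Rightarrow> real \<Rightarrow> real \<Rightarrow> real" where
  "sigma_plus H a s = Sup {p. H s p = a}"

definition sigma_minus :: "(real \<Rightarrow> real \<Rightarrow> real) \<Rightarrow> real \<Rightarrow> real \<Rightarrow> real" where
  "sigma_minus H a s = Inf {p. H s p = a}"

end

theory Submission
  imports Defs
begin

(*
  Comparison principle: if u is a periodic subsolution at level a and the continuous slope f satisfies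
  H(s,q) > a for all q >= f(s), then u - int_0^x f cannot increase (otherwise u - int_0^x f - d e^(Kx)
  has an interior maximum, where the test slope exceeds f), so int_0^1 f >= 0.  Taking f = sigma+ + eps
  and a periodic subsolution at a level between c_H and min_s H(s, f(s)) gives int sigma+ >= 0, and
  symmetrically int sigma- <= 0.  The hypothesis on c_H leaves two cases.  If min_p H(s,p) = c_H for
  every s, then sigma- = sigma+ and both integrals vanish.  Otherwise every sublevel set {H(s,.) < c_H}
  is nonempty, so sigma- < sigma+; if both integrals were nonzero, the convex combination of sigma- and
  sigma+ with zero mean would be the derivative of a classical periodic subsolution strictly below c_H.
*)

section \<open>Real analysis on the unit interval\<close>

lemma continuous_on_uncurried_comp:
  fixes H :: "'a::topological_space \<Rightarrow> 'b::topological_space \<Rightarrow> 'c::topological_space"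
  assumes H: "continuous_on (S \<times> UNIV) (\<lambda>(s, p). H s p)"
    and f: "continuous_on T f" and g: "continuous_on T g" and fT: "f ` T \<subseteq> S"
  shows "continuous_on T (\<lambda>t. H (f t) (g t))"
  using continuous_on_compose2[OF H continuous_on_Pair[OF f g]] fT by auto

lemma has_real_derivative_indefinite_integral_01:
  fixes f :: "real \<Rightarrow> real"
  assumes f: "continuous_on {0..1} f" and x: "x \<in> {0<..<1}"
  shows "((\<lambda>x. integral {0..x} f) has_real_derivative f x) (at x)"
  using integral_has_real_derivative[OF f, of x] x by (simp add: at_within_Icc_at)

lemma continuous_on_indefinite_integral_01:
  fixes f :: "real \<Rightarrow> real"
  assumes "continuous_on {0..1} f"
  shows "continuous_on {0..1} (\<lambda>x. integral {0..x} f)"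
  by (rule indefinite_integral_continuous_1) (rule integrable_continuous_interval[OF assms])

lemma has_real_derivative_reflect:
  assumes "(f has_real_derivative f') (at (1 - x))"
  shows "((\<lambda>x. f (1 - x)) has_real_derivative - f') (at x)"
proof -
  have "((\<lambda>x. 1 - x) has_real_derivative - 1) (at x)" by (auto intro!: derivative_eq_intros)
  from DERIV_chain2[where f = f and g = "\<lambda>x. 1 - x", OF assms this] show ?thesis by simp
qed

lemma continuous_on_reflect_01:
  assumes "continuous_on S f" and "(\<lambda>x. 1 - x) ` T \<subseteq> S"
  shows "continuous_on T (\<lambda>x::real. f (1 - x))"
  using assms by (intro continuous_on_compose2[OF assms(1)] continuous_intros)

lemma exp_tilt_interior_maximum:
  fixes w :: "real \<Rightarrow> real"
  assumes wc: "continuous_on {0..1} w" and w01: "w 0 < w 1"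
  obtains \<delta> K x0 where "\<delta> > 0" "K > 0" "x0 \<in> {0<..<1}"
    "\<forall>x\<in>{0..1}. w x - \<delta> * exp (K * x) \<le> w x0 - \<delta> * exp (K * x0)"
proof -
  have "(w \<longlongrightarrow> w 1) (at 1 within {0..1})"
    using wc by (simp add: continuous_on_def)
  then have "(w \<longlongrightarrow> w 1) (at_left 1)"
    by (simp add: at_within_Icc_at_left)
  then have "\<forall>\<^sub>F x in at_left 1. w 0 < w x"
    using w01 by (rule order_tendstoD)
  moreover have "\<forall>\<^sub>F x in at_left 1. x \<in> {0<..<(1::real)}"
    by (rule eventually_at_leftI) auto
  ultimately have "\<exists>r. w 0 < w r \<and> r \<in> {0<..<1}"
    by (intro eventually_happens'[OF trivial_limit_at_left_real eventually_conj])
  then obtain r where r: "0 < r" "r < 1" "w 0 < w r" by auto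
  define \<eta> where "\<eta> = (w r - w 0) / 2"
  define K where "K = (\<bar>w 1 - w r\<bar> + 1) / (\<eta> * (1 - r))"
  define \<delta> where "\<delta> = \<eta> * exp (- K * r)"
  have \<eta>: "\<eta> > 0" using r by (simp add: \<eta>_def)
  have K: "K > 0" using \<eta> r by (simp add: K_def)
  have \<delta>: "\<delta> > 0" using \<eta> by (simp add: \<delta>_def)
  have g: "\<delta> * exp (K * x) = \<eta> * exp (K * (x - r))" for x
    by (simp add: \<delta>_def algebra_simps flip: exp_add)
  let ?v = "\<lambda>x. w x - \<delta> * exp (K * x)"
  have "continuous_on {0..1} ?v" by (intro continuous_intros wc)
  then obtain x0 where x0: "x0 \<in> {0..1}" and max: "\<forall>x\<in>{0..1}. ?v x \<le> ?v x0"
    using continuous_attains_sup[of "{0..1}" ?v] by auto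
  have "?v 0 < ?v r" using r \<delta> by (simp add: g \<eta>_def field_simps)
  moreover have "?v 1 < ?v r"
  proof -
    have "\<eta> * (1 + K * (1 - r)) \<le> \<eta> * exp (K * (1 - r))"
      using \<eta> exp_ge_add_one_self[of "K * (1 - r)"] by (intro mult_left_mono) auto
    moreover have "\<eta> * (1 + K * (1 - r)) = \<eta> + \<bar>w 1 - w r\<bar> + 1"
      using \<eta> r by (simp add: K_def field_simps)
    ultimately show ?thesis using g[of 1] g[of r] by simp
  qed
  moreover have "?v r \<le> ?v x0" using max r by simp
  ultimately have "x0 \<in> {0<..<1}" using x0 by (auto simp: less_le)
  with \<delta> K max show ?thesis using that by blast
qed

lemma eventually_gt_on_compact:
  fixes H :: "'a::topological_space \<Rightarrow> 'b::topological_space \<Rightarrow> real"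
  assumes H: "continuous_on (S \<times> UNIV) (\<lambda>(s, p). H s p)" and s: "s \<in> S"
    and K: "compact K" and gt: "\<forall>p\<in>K. c < H s p"
  shows "\<forall>\<^sub>F s' in at s within S. \<forall>p\<in>K. c < H s' p"
proof -
  obtain W where W: "open W" "W \<inter> (S \<times> UNIV) = (\<lambda>(s, p). H s p) -` {c<..} \<inter> (S \<times> UNIV)"
    using H unfolding continuous_on_open_invariant by (meson open_greaterThan)
  have "{s} \<times> K \<subseteq> W" using W(2) s gt by auto
  then obtain X where X: "s \<in> X" "open X" "X \<times> K \<subseteq> W"
    using Elementary_Topology.tube_lemma[OF K W(1)] by blast
  have "\<forall>\<^sub>F s' in at s within S. s' \<in> X \<inter> S"
    using X by (auto simp: eventually_at_filter eventually_nhds)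
  then show ?thesis
  proof (rule eventually_mono, intro ballI)
    fix s' p assume "s' \<in> X \<inter> S" "p \<in> K"
    then have "(s', p) \<in> W \<inter> (S \<times> UNIV)" using X(3) by auto
    then show "c < H s' p" using W(2) by auto
  qed
qed

lemma sublevel_eq_level_interval:
  fixes g :: "real \<Rightarrow> real"
  assumes g: "continuous_on UNIV g" and bdd: "bounded {p. g p \<le> b}"
    and cvx: "convex {p. g p \<le> b}" and ne: "\<exists>p. g p \<le> b"
  shows "{p. g p \<le> b} = {Inf {p. g p = b}..Sup {p. g p = b}}"
    and "g (Inf {p. g p = b}) = b" and "g (Sup {p. g p = b}) = b"
proof -
  have "closed {p. g p \<le> b}" using g by (intro closed_Collect_le continuous_intros)
  with bdd cvx have "connected {p. g p \<le> b} \<and> compact {p. g p \<le> b}"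
    by (simp add: convex_connected compact_eq_bounded_closed)
  then obtain lo hi where lohi: "{p. g p \<le> b} = {lo..hi}"
    using connected_compact_interval_1 by blast
  obtain p where "g p \<le> b" using ne by blast
  then have "p \<in> {lo..hi}" unfolding lohi[symmetric] by simp
  then have "lo \<le> hi" by simp
  have "open {p. g p < b}" using g by (intro open_Collect_less continuous_intros)
  then have "{p. g p < b} \<subseteq> interior {p. g p \<le> b}" by (intro interior_maximal) auto
  then have strict: "{p. g p < b} \<subseteq> {lo<..<hi}" by (simp add: lohi)
  have "lo \<in> {p. g p \<le> b}" "hi \<in> {p. g p \<le> b}"
    unfolding lohi using \<open>lo \<le> hi\<close> by auto
  moreover have "\<not> g lo < b" "\<not> g hi < b" using strict by auto
  ultimately have "g lo = b" "g hi = b" by auto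
  moreover have "{p. g p = b} \<subseteq> {lo..hi}" unfolding lohi[symmetric] by auto
  ultimately have "Inf {p. g p = b} = lo" "Sup {p. g p = b} = hi"
    by (intro cInf_eq_minimum cSup_eq_maximum; force)+
  with lohi \<open>g lo = b\<close> \<open>g hi = b\<close> show "{p. g p \<le> b} = {Inf {p. g p = b}..Sup {p. g p = b}}"
    and "g (Inf {p. g p = b}) = b" and "g (Sup {p. g p = b}) = b" by simp_all
qed

lemma Collect_uminus_eq_image: "{p::real. P (- p)} = uminus ` {p. P p}"
  by (auto intro: rev_image_eqI[of "- _"])

section \<open>Viscosity subsolutions in one dimension\<close>

lemma visc_subsolD:
  assumes "visc_subsol H a u" and "x0 \<in> {0<..<1}"
    and "\<forall>x\<in>{0<..<1}. (\<phi> has_real_derivative \<phi>' x) (at x)" and "continuous_on {0<..<1} \<phi>'"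
    and "e > 0" and "\<forall>x\<in>{0<..<1}. \<bar>x - x0\<bar> < e \<longrightarrow> u x - \<phi> x \<le> u x0 - \<phi> x0"
  shows "H x0 (\<phi>' x0) \<le> a"
  using assms unfolding visc_subsol_def by blast

lemma visc_subsol_growth_le:
  fixes u \<psi> \<psi>' :: "real \<Rightarrow> real"
  assumes uc: "continuous_on {0..1} u" and u: "visc_subsol H a u"
    and \<psi>: "continuous_on {0..1} \<psi>" "\<forall>x\<in>{0<..<1}. (\<psi> has_real_derivative \<psi>' x) (at x)"
      "continuous_on {0<..<1} \<psi>'"
    and above: "\<forall>r\<in>{0<..<1}. \<forall>q\<ge>\<psi>' r. a < H r q"
  shows "u 1 - u 0 \<le> \<psi> 1 - \<psi> 0"
proof (rule ccontr)
  assume "\<not> ?thesis"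
  then have "u 0 - \<psi> 0 < u 1 - \<psi> 1" by simp
  moreover have "continuous_on {0..1} (\<lambda>x. u x - \<psi> x)" by (intro continuous_intros uc \<psi>(1))
  ultimately obtain \<delta> K x0 where \<delta>: "\<delta> > 0" and K: "K > 0" and x0: "x0 \<in> {0<..<1}"
    and max: "\<forall>x\<in>{0..1}. u x - \<psi> x - \<delta> * exp (K * x) \<le> u x0 - \<psi> x0 - \<delta> * exp (K * x0)"
    using exp_tilt_interior_maximum[of "\<lambda>x. u x - \<psi> x"] by blast
  let ?\<phi>' = "\<lambda>x. \<psi>' x + \<delta> * (K * exp (K * x))"
  have "H x0 (?\<phi>' x0) \<le> a"
  proof (rule visc_subsolD[OF u x0 _ _ zero_less_one])
    show "\<forall>x\<in>{0<..<1}. ((\<lambda>x. \<psi> x + \<delta> * exp (K * x)) has_real_derivative ?\<phi>' x) (at x)"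
      using \<psi>(2) by (auto intro!: derivative_eq_intros)
    show "continuous_on {0<..<1} ?\<phi>'" by (intro continuous_intros \<psi>(3))
    show "\<forall>x\<in>{0<..<1}. \<bar>x - x0\<bar> < 1 \<longrightarrow>
        u x - (\<psi> x + \<delta> * exp (K * x)) \<le> u x0 - (\<psi> x0 + \<delta> * exp (K * x0))"
      using max by (auto simp: algebra_simps)
  qed
  moreover have "\<psi>' x0 \<le> ?\<phi>' x0" using \<delta> K by simp
  ultimately show False using above x0 by fastforce
qed

lemma visc_subsol_reflect:
  assumes u: "visc_subsol H a u"
  shows "visc_subsol (\<lambda>s p. H (1 - s) (- p)) a (\<lambda>x. u (1 - x))"
  unfolding visc_subsol_def
proof (intro conjI ballI allI impI)
  show "continuous_on {0<..<1} (\<lambda>x. u (1 - x))"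
    using u by (intro continuous_on_reflect_01[where S = "{0<..<1}"]) (auto simp: visc_subsol_def)
next
  fix x0 \<phi> \<phi>' assume x0: "x0 \<in> {0<..<(1::real)}" and test:
    "(\<forall>x\<in>{0<..<1}. (\<phi> has_real_derivative \<phi>' x) (at x)) \<and> continuous_on {0<..<1} \<phi>' \<and>
     (\<exists>e>0. \<forall>x\<in>{0<..<1}. \<bar>x - x0\<bar> < e \<longrightarrow> u (1 - x) - \<phi> x \<le> u (1 - x0) - \<phi> x0)"
  then obtain e where e: "e > 0"
    and max: "\<forall>x\<in>{0<..<1}. \<bar>x - x0\<bar> < e \<longrightarrow> u (1 - x) - \<phi> x \<le> u (1 - x0) - \<phi> x0" by blast
  have deriv: "\<forall>x\<in>{0<..<1}. ((\<lambda>x. \<phi> (1 - x)) has_real_derivative - \<phi>' (1 - x)) (at x)"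
    using test by (auto intro: has_real_derivative_reflect)
  have cont: "continuous_on {0<..<1} (\<lambda>x. - \<phi>' (1 - x))"
    using test by (intro continuous_intros continuous_on_reflect_01[where S = "{0<..<1}"]) auto
  have max': "\<forall>x\<in>{0<..<1}. \<bar>x - (1 - x0)\<bar> < e \<longrightarrow> u x - \<phi> (1 - x) \<le> u (1 - x0) - \<phi> (1 - (1 - x0))"
  proof (intro ballI impI)
    fix x :: real assume "x \<in> {0<..<1}" "\<bar>x - (1 - x0)\<bar> < e"
    then show "u x - \<phi> (1 - x) \<le> u (1 - x0) - \<phi> (1 - (1 - x0))"
      using max[rule_format, of "1 - x"] by (simp add: abs_minus_commute)
  qed
  have "1 - x0 \<in> {0<..<1}" using x0 by auto
  from visc_subsolD[OF u this deriv cont e max']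
  have "H (1 - x0) (- \<phi>' (1 - (1 - x0))) \<le> a" .
  then show "H (1 - x0) (- \<phi>' x0) \<le> a" by simp
qed

lemma visc_subsol_growth_ge:
  fixes u \<psi> \<psi>' :: "real \<Rightarrow> real"
  assumes uc: "continuous_on {0..1} u" and u: "visc_subsol H a u"
    and \<psi>: "continuous_on {0..1} \<psi>" "\<forall>x\<in>{0<..<1}. (\<psi> has_real_derivative \<psi>' x) (at x)"
      "continuous_on {0<..<1} \<psi>'"
    and below: "\<forall>r\<in>{0<..<1}. \<forall>q\<le>\<psi>' r. a < H r q"
  shows "\<psi> 1 - \<psi> 0 \<le> u 1 - u 0"
proof -
  have "continuous_on {0..1} (\<lambda>x. u (1 - x))" "continuous_on {0..1} (\<lambda>x. \<psi> (1 - x))"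
    using uc \<psi>(1) by (auto intro: continuous_on_reflect_01)
  moreover have "\<forall>x\<in>{0<..<1}. ((\<lambda>x. \<psi> (1 - x)) has_real_derivative - \<psi>' (1 - x)) (at x)"
    using \<psi>(2) by (auto intro: has_real_derivative_reflect)
  moreover have "continuous_on {0<..<1} (\<lambda>x. - \<psi>' (1 - x))"
    using \<psi>(3) by (intro continuous_intros continuous_on_reflect_01[where S = "{0<..<1}"]) auto
  moreover have "\<forall>r\<in>{0<..<1}. \<forall>q\<ge>- \<psi>' (1 - r). a < H (1 - r) (- q)"
  proof (intro ballI allI impI)
    fix r q :: real assume "r \<in> {0<..<1}" "- \<psi>' (1 - r) \<le> q"
    then show "a < H (1 - r) (- q)" using below[rule_format, of "1 - r" "- q"] by auto
  qed
  ultimately have "u (1 - 1) - u (1 - 0) \<le> \<psi> (1 - 1) - \<psi> (1 - 0)"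
    by (rule visc_subsol_growth_le[OF _ visc_subsol_reflect[OF u]])
  then show ?thesis by simp
qed

lemma periodic_subsol_integral_nonneg:
  fixes f :: "real \<Rightarrow> real"
  assumes u: "periodic_subsol H a u" and f: "continuous_on {0..1} f"
    and above: "\<forall>r\<in>{0<..<1}. \<forall>q\<ge>f r. a < H r q"
  shows "0 \<le> integral {0..1} f"
proof -
  have "u 1 - u 0 \<le> integral {0..1} f - integral {0..0} f"
    using u f above by (intro visc_subsol_growth_le[where \<psi> = "\<lambda>x. integral {0..x} f"])
      (auto simp: periodic_subsol_def has_real_derivative_indefinite_integral_01
        continuous_on_indefinite_integral_01 intro: continuous_on_subset)
  then show ?thesis using u by (simp add: periodic_subsol_def)
qed

lemma periodic_subsol_integral_nonpos:
  fixes f :: "real \<Rightarrow> real"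
  assumes u: "periodic_subsol H a u" and f: "continuous_on {0..1} f"
    and below: "\<forall>r\<in>{0<..<1}. \<forall>q\<le>f r. a < H r q"
  shows "integral {0..1} f \<le> 0"
proof -
  have "integral {0..1} f - integral {0..0} f \<le> u 1 - u 0"
    using u f below by (intro visc_subsol_growth_ge[where \<psi> = "\<lambda>x. integral {0..x} f"])
      (auto simp: periodic_subsol_def has_real_derivative_indefinite_integral_01
        continuous_on_indefinite_integral_01 intro: continuous_on_subset)
  then show ?thesis using u by (simp add: periodic_subsol_def)
qed

lemma periodic_subsol_sublevel_nonempty:
  assumes "periodic_subsol H a u"
  shows "\<exists>r\<in>{0<..<1}. \<exists>q. H r q \<le> a"
proof (rule ccontr)
  assume "\<not> ?thesis"
  then have "\<forall>r\<in>{0<..<1}. \<forall>q\<ge>-1. a < H r q" by (auto simp: not_le)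
  from periodic_subsol_integral_nonneg[OF assms _ this] show False by simp
qed

lemma periodic_subsol_indefinite_integral:
  fixes f :: "real \<Rightarrow> real"
  assumes f: "continuous_on {0..1} f" and mean: "integral {0..1} f = 0"
    and le: "\<forall>s\<in>{0<..<1}. H s (f s) \<le> a"
  shows "periodic_subsol H a (\<lambda>x. integral {0..x} f)"
proof -
  let ?u = "\<lambda>x. integral {0..x} f"
  have uc: "continuous_on {0..1} ?u" using f by (rule continuous_on_indefinite_integral_01)
  have "visc_subsol H a ?u" unfolding visc_subsol_def
  proof (intro conjI ballI allI impI)
    show "continuous_on {0<..<1} ?u" using uc by (rule continuous_on_subset) auto
  next
    fix x0 \<phi> \<phi>' assume x0: "x0 \<in> {0<..<(1::real)}" and
      test: "(\<forall>x\<in>{0<..<1}. (\<phi> has_real_derivative \<phi>' x) (at x)) \<and> continuous_on {0<..<1} \<phi>' \<and>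
        (\<exists>e>0. \<forall>x\<in>{0<..<1}. \<bar>x - x0\<bar> < e \<longrightarrow> ?u x - \<phi> x \<le> ?u x0 - \<phi> x0)"
    then obtain e where e: "e > 0" and max: "\<forall>x\<in>{0<..<1}. \<bar>x - x0\<bar> < e \<longrightarrow> ?u x - \<phi> x \<le> ?u x0 - \<phi> x0"
      by blast
    have "((\<lambda>x. ?u x - \<phi> x) has_real_derivative f x0 - \<phi>' x0) (at x0)"
      using test x0 has_real_derivative_indefinite_integral_01[OF f x0] by (auto intro!: derivative_eq_intros)
    moreover have "min e (min x0 (1 - x0)) > 0" using e x0 by auto
    moreover have "\<forall>y. \<bar>x0 - y\<bar> < min e (min x0 (1 - x0)) \<longrightarrow> ?u y - \<phi> y \<le> ?u x0 - \<phi> x0"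
      using max by (auto simp: abs_less_iff)
    ultimately have "f x0 - \<phi>' x0 = 0" by (rule DERIV_local_max)
    then show "H x0 (\<phi>' x0) \<le> a" using le x0 by force
  qed
  with uc mean show ?thesis by (simp add: periodic_subsol_def)
qed

section \<open>The critical value\<close>

definition subsol_levels :: "(real \<Rightarrow> real \<Rightarrow> real) \<Rightarrow> real set" where
  "subsol_levels H = {a. \<exists>u. periodic_subsol H a u}"

lemma c_H_eq_Inf_subsol_levels: "c_H H = Inf (subsol_levels H)"
  by (simp add: c_H_def subsol_levels_def)

locale coercive_hamiltonian =
  fixes H :: "real \<Rightarrow> real \<Rightarrow> real"
  assumes continuous: "continuous_on ({0..1} \<times> UNIV) (\<lambda>(s, p). H s p)"
    and coercive: "coercive_H H"
begin

lemma continuous_on_H_comp: "continuous_on {0..1} f \<Longrightarrow> continuous_on {0..1} (\<lambda>s. H s (f s))"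
  by (rule continuous_on_uncurried_comp[OF continuous continuous_on_id]) auto

lemma continuous_on_H_left: "continuous_on {0..1} (\<lambda>s. H s p)"
  by (rule continuous_on_H_comp) (rule continuous_on_const)

lemma continuous_on_H: "s \<in> {0..1} \<Longrightarrow> continuous_on UNIV (H s)"
  using continuous_on_uncurried_comp[OF continuous continuous_on_const continuous_on_id, where T = UNIV]
  by (simp add: image_subset_iff)

lemma sublevel_bound:
  obtains R where "\<And>s p. s \<in> {0..1} \<Longrightarrow> H s p \<le> b \<Longrightarrow> \<bar>p\<bar> \<le> R"
proof -
  obtain R where R: "\<forall>s\<in>{0..1}. \<forall>p. \<bar>p\<bar> > R \<longrightarrow> H s p > b"
    using coercive unfolding coercive_H_def by blast
  have "\<bar>p\<bar> \<le> R" if "s \<in> {0..1}" "H s p \<le> b" for s p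
    using R that by (meson not_le)
  then show ?thesis by (rule that)
qed

lemma bounded_below:
  obtains m where "\<And>s p. s \<in> {0..1} \<Longrightarrow> m \<le> H s p"
proof -
  obtain R where R: "\<And>s p. s \<in> {0..1} \<Longrightarrow> H s p \<le> 0 \<Longrightarrow> \<bar>p\<bar> \<le> R"
    using sublevel_bound[of 0] by blast
  have "continuous_on ({0..1} \<times> {-R..R}) (\<lambda>(s, p). H s p)"
    by (rule continuous_on_subset[OF continuous]) auto
  then have "compact ((\<lambda>(s, p). H s p) ` ({0..1} \<times> {-R..R}))"
    by (rule compact_continuous_image) (intro compact_Times compact_Icc)
  then have "bdd_below ((\<lambda>(s, p). H s p) ` ({0..1} \<times> {-R..R}))"
    by (intro bounded_imp_bdd_below compact_imp_bounded)
  then obtain m where "\<forall>s\<in>{0..1}. \<forall>p\<in>{-R..R}. m \<le> H s p"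
    unfolding bdd_below_def by auto
  then have m: "\<And>s p. s \<in> {0..1} \<Longrightarrow> \<bar>p\<bar> \<le> R \<Longrightarrow> m \<le> H s p"
    by (simp add: abs_le_iff)
  have "min 0 m \<le> H s p" if s: "s \<in> {0..1}" for s p
  proof (cases "\<bar>p\<bar> \<le> R")
    case True
    then show ?thesis using m[OF s] by (simp add: min_le_iff_disj)
  next
    case False
    then have "0 < H s p" using R[OF s, of p] by force
    then show ?thesis by (simp add: min_le_iff_disj)
  qed
  then show ?thesis by (rule that)
qed

lemma bounded_sublevel:
  assumes s: "s \<in> {0..1}"
  shows "bounded {p. H s p \<le> b}"
proof -
  obtain R where R: "\<And>s p. s \<in> {0..1} \<Longrightarrow> H s p \<le> b \<Longrightarrow> \<bar>p\<bar> \<le> R"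
    using sublevel_bound[of b] by blast
  show ?thesis by (rule boundedI[of _ R]) (use R[OF s] in auto)
qed

lemma minH_attained:
  assumes s: "s \<in> {0..1}"
  obtains p where "minH H s = H s p" and "\<And>q. H s p \<le> H s q"
proof -
  let ?S = "{p. H s p \<le> H s 0}"
  have "closed ?S"
    using closed_Collect_le[OF continuous_on_H[OF s] continuous_on_const] by simp
  then have "compact ?S" using bounded_sublevel[OF s] by (simp add: compact_eq_bounded_closed)
  moreover have "continuous_on ?S (H s)" using continuous_on_H[OF s] by (rule continuous_on_subset) simp
  moreover have "?S \<noteq> {}" by auto
  ultimately have "\<exists>p\<in>?S. \<forall>q\<in>?S. H s p \<le> H s q" by (intro continuous_attains_inf)
  then obtain p where p: "p \<in> ?S" "\<forall>q\<in>?S. H s p \<le> H s q" ..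
  have min: "H s p \<le> H s q" for q using p by (cases "q \<in> ?S") auto
  then have "minH H s = H s p" unfolding minH_def by (intro cInf_eq_minimum) auto
  from this min show ?thesis by (rule that)
qed

lemma subsol_levels_nonempty: "subsol_levels H \<noteq> {}"
proof -
  have "\<exists>s0\<in>{0..1}. \<forall>s\<in>{0..1}. H s 0 \<le> H s0 0"
    by (rule continuous_attains_sup[OF compact_Icc _ continuous_on_H_left]) simp
  then obtain s0 where "\<forall>s\<in>{0..1}. H s 0 \<le> H s0 0" by blast
  then have "periodic_subsol H (H s0 0) (\<lambda>x. integral {0..x} (\<lambda>_. 0))"
    by (intro periodic_subsol_indefinite_integral) auto
  then show ?thesis unfolding subsol_levels_def by blast
qed

lemma bdd_below_subsol_levels: "bdd_below (subsol_levels H)"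
proof -
  obtain m where m: "\<And>s p. s \<in> {0..1} \<Longrightarrow> m \<le> H s p" using bounded_below by blast
  have "m \<le> a" if "a \<in> subsol_levels H" for a
  proof -
    from that obtain u where "periodic_subsol H a u" unfolding subsol_levels_def by blast
    then obtain r q where "r \<in> {0<..<1}" "H r q \<le> a" using periodic_subsol_sublevel_nonempty by blast
    with m[of r q] show ?thesis by auto
  qed
  then show ?thesis by (rule bdd_belowI)
qed

lemma c_H_le: "periodic_subsol H a u \<Longrightarrow> c_H H \<le> a"
  unfolding c_H_eq_Inf_subsol_levels
  by (rule cInf_lower[OF _ bdd_below_subsol_levels]) (auto simp: subsol_levels_def)

lemma le_c_H:
  assumes "\<And>s p. s \<in> {0..1} \<Longrightarrow> k \<le> H s p"
  shows "k \<le> c_H H"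
  unfolding c_H_eq_Inf_subsol_levels
proof (rule cInf_greatest[OF subsol_levels_nonempty])
  fix a assume "a \<in> subsol_levels H"
  then obtain u where "periodic_subsol H a u" unfolding subsol_levels_def by blast
  then obtain r q where "r \<in> {0<..<1}" "H r q \<le> a" using periodic_subsol_sublevel_nonempty by blast
  with assms[of r q] show "k \<le> a" by auto
qed

lemma periodic_subsol_below:
  assumes f: "continuous_on {0..1} f" and gt: "\<forall>s\<in>{0..1}. c_H H < H s (f s)"
  obtains a u where "periodic_subsol H a u" and "\<forall>s\<in>{0..1}. a < H s (f s)"
proof -
  have "\<exists>s1\<in>{0..1}. \<forall>s\<in>{0..1}. H s1 (f s1) \<le> H s (f s)"
    by (rule continuous_attains_inf[OF compact_Icc _ continuous_on_H_comp[OF f]]) simp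
  then obtain s1 where s1: "s1 \<in> {0..1}" and min: "\<forall>s\<in>{0..1}. H s1 (f s1) \<le> H s (f s)" ..
  have "Inf (subsol_levels H) < H s1 (f s1)"
    using gt s1 by (simp add: c_H_eq_Inf_subsol_levels)
  then obtain a where a: "a \<in> subsol_levels H" "a < H s1 (f s1)"
    using cInf_less_iff[OF subsol_levels_nonempty bdd_below_subsol_levels] by blast
  from a(1) obtain u where "periodic_subsol H a u" unfolding subsol_levels_def by blast
  moreover have "\<forall>s\<in>{0..1}. a < H s (f s)" using min a(2) by force
  ultimately show ?thesis by (rule that)
qed

lemma c_H_le_zero_mean:
  assumes f: "continuous_on {0..1} f" and mean: "integral {0..1} f = 0"
  shows "\<exists>s\<in>{0..1}. c_H H \<le> H s (f s)"
proof -
  have "\<exists>s2\<in>{0..1}. \<forall>s\<in>{0..1}. H s (f s) \<le> H s2 (f s2)"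
    by (rule continuous_attains_sup[OF compact_Icc _ continuous_on_H_comp[OF f]]) simp
  then obtain s2 where s2: "s2 \<in> {0..1}" and max: "\<forall>s\<in>{0..1}. H s (f s) \<le> H s2 (f s2)" ..
  have "periodic_subsol H (H s2 (f s2)) (\<lambda>x. integral {0..x} f)"
    using max by (intro periodic_subsol_indefinite_integral[OF f mean]) auto
  with s2 show ?thesis by (blast intro: c_H_le)
qed

lemma minH_le: "s \<in> {0..1} \<Longrightarrow> minH H s \<le> H s q"
  by (metis minH_attained)

lemma minH_le_a_H:
  assumes s: "s \<in> {0..1}"
  shows "minH H s \<le> a_H H"
proof -
  have "compact ((\<lambda>s. H s 0) ` {0..1})"
    by (rule compact_continuous_image[OF continuous_on_H_left compact_Icc])
  then have "bdd_above ((\<lambda>s. H s 0) ` {0..1})" by (intro bounded_imp_bdd_above compact_imp_bounded)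
  then obtain M where M: "\<forall>s\<in>{0..1}. H s 0 \<le> M" by (auto simp: bdd_above_def)
  then have "bdd_above (minH H ` {0..1})"
    by (intro bdd_aboveI[of _ M]) (auto intro: order_trans[OF minH_le])
  then show ?thesis unfolding a_H_def using s by (intro cSup_upper) auto
qed

lemma critical_level_dichotomy:
  assumes "a_H H < c_H H \<or> (\<exists>k. \<forall>s\<in>{0..1}. minH H s = k)"
  shows "(\<forall>s\<in>{0..1}. \<exists>p. H s p < c_H H) \<or> (\<forall>s\<in>{0..1}. minH H s = c_H H)"
proof (cases "a_H H < c_H H")
  case True
  have "\<exists>p. H s p < c_H H" if s: "s \<in> {0..1}" for s
  proof -
    obtain p where "minH H s = H s p" using minH_attained[OF s] by blast
    with minH_le_a_H[OF s] True have "H s p < c_H H" by simp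
    then show ?thesis ..
  qed
  then show ?thesis by blast
next
  case False
  with assms obtain k where k: "\<forall>s\<in>{0..1}. minH H s = k" by blast
  then have "minH H ` {0..1} = {k}" by force
  then have "a_H H = k" by (simp add: a_H_def)
  moreover have "k \<le> c_H H" using k minH_le by (intro le_c_H) fastforce
  ultimately have "c_H H = k" using False by simp
  with k show ?thesis by simp
qed

end

section \<open>Level sets of a quasiconvex Hamiltonian\<close>

lemma sigma_minus_eq_uminus_sigma_plus:
  "sigma_minus H b s = - sigma_plus (\<lambda>s p. H s (- p)) b s"
  by (simp add: sigma_minus_def sigma_plus_def Inf_real_def Collect_uminus_eq_image[of "\<lambda>p. H s p = b"])

locale quasiconvex_hamiltonian = coercive_hamiltonian +
  assumes quasiconvex: "quasiconvex_H H"
    and interior_sublevel: "\<forall>s\<in>{0..1}. \<forall>b. interior {p. H s p \<le> b} = {p. H s p < b}"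
begin

lemma quasiconvex_le_max:
  assumes "s \<in> {0..1}" and "x \<le> p" and "p \<le> y"
  shows "H s p \<le> max (H s x) (H s y)"
proof -
  have "is_interval {q. H s q \<le> max (H s x) (H s y)}"
    using quasiconvex assms(1) by (simp add: quasiconvex_H_def is_interval_convex_1)
  then show ?thesis using assms(2,3) unfolding is_interval_1 by fastforce
qed

lemma sublevel_eq_sigma_interval:
  assumes s: "s \<in> {0..1}" and ne: "\<exists>p. H s p \<le> b"
  shows "{p. H s p \<le> b} = {sigma_minus H b s..sigma_plus H b s}"
    and "H s (sigma_minus H b s) = b" and "H s (sigma_plus H b s) = b"
proof -
  have cvx: "convex {p. H s p \<le> b}" using quasiconvex s by (simp add: quasiconvex_H_def)
  note L = sublevel_eq_level_interval[OF continuous_on_H[OF s] bounded_sublevel[OF s] cvx ne]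
  show "{p. H s p \<le> b} = {sigma_minus H b s..sigma_plus H b s}"
    and "H s (sigma_minus H b s) = b" and "H s (sigma_plus H b s) = b"
    using L by (simp_all add: sigma_minus_def sigma_plus_def)
qed

lemma strict_sublevel_eq_sigma_interval:
  assumes s: "s \<in> {0..1}" and ne: "\<exists>p. H s p \<le> b"
  shows "{p. H s p < b} = {sigma_minus H b s<..<sigma_plus H b s}"
proof -
  have "{p. H s p < b} = interior {p. H s p \<le> b}" using interior_sublevel s by simp
  then show ?thesis by (simp add: sublevel_eq_sigma_interval(1)[OF s ne])
qed

lemma sigma_plus_less_imp_level_less:
  assumes "s \<in> {0..1}" and "\<exists>p. H s p \<le> b" and "sigma_plus H b s < p"
  shows "b < H s p"
  using sublevel_eq_sigma_interval(1)[OF assms(1,2)] assms(3) by (auto simp: set_eq_iff not_le[symmetric])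

lemma less_sigma_minus_imp_level_less:
  assumes "s \<in> {0..1}" and "\<exists>p. H s p \<le> b" and "p < sigma_minus H b s"
  shows "b < H s p"
  using sublevel_eq_sigma_interval(1)[OF assms(1,2)] assms(3) by (auto simp: set_eq_iff not_le[symmetric])

lemma continuous_on_sigma_plus:
  assumes ne: "\<And>s. s \<in> {0..1} \<Longrightarrow> \<exists>p. H s p \<le> b"
  shows "continuous_on {0..1} (sigma_plus H b)"
  \<comment> \<open>Above: H(s,.) > b on a compact interval right of sigma+ persists for nearby s.
    Below: either a point of the open sublevel set, or (if the sublevel set is a single point)
    again H(s,.) > b on a compact interval to the left.\<close>
  unfolding continuous_on_def
proof (intro ballI order_tendstoI)
  fix s :: real assume s: "s \<in> {0..1}"
  let ?\<sigma> = "sigma_plus H b" and ?\<tau> = "sigma_minus H b"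
  obtain R where R: "\<And>s p. s \<in> {0..1} \<Longrightarrow> H s p \<le> b \<Longrightarrow> \<bar>p\<bar> \<le> R"
    using sublevel_bound[of b] by blast
  have near: "\<forall>\<^sub>F s' in at s within {0..1}. s' \<in> {0..1}" by (simp add: eventually_at_filter)
  have level: "H s' (?\<sigma> s') = b" and bound: "-R \<le> ?\<sigma> s' \<and> ?\<sigma> s' \<le> R" if "s' \<in> {0..1}" for s'
    using sublevel_eq_sigma_interval(3)[OF that ne[OF that]] R[OF that, of "?\<sigma> s'"] by auto
  have interval: "{p. H s p \<le> b} = {?\<tau> s..?\<sigma> s}"
    by (rule sublevel_eq_sigma_interval(1)[OF s ne[OF s]])
  show "\<forall>\<^sub>F s' in at s within {0..1}. ?\<sigma> s' < y" if "?\<sigma> s < y" for y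
  proof -
    have "\<forall>p\<in>{y..R}. b < H s p"
      using sigma_plus_less_imp_level_less[OF s ne[OF s]] that by auto
    then have "\<forall>\<^sub>F s' in at s within {0..1}. \<forall>p\<in>{y..R}. b < H s' p"
      by (rule eventually_gt_on_compact[OF continuous s compact_Icc])
    with near show ?thesis
    proof eventually_elim
      case (elim s')
      show "?\<sigma> s' < y"
      proof (rule ccontr)
        assume "\<not> ?\<sigma> s' < y"
        then have "?\<sigma> s' \<in> {y..R}" using bound[OF elim(1)] by auto
        then show False using elim(2) level[OF elim(1)] by fastforce
      qed
    qed
  qed
  show "\<forall>\<^sub>F s' in at s within {0..1}. y < ?\<sigma> s'" if "y < ?\<sigma> s" for y
  proof (cases "?\<tau> s < ?\<sigma> s")
    case True
    define p where "p = (max y (?\<tau> s) + ?\<sigma> s) / 2"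
    have "p \<in> {?\<tau> s<..<?\<sigma> s}" using True that by (auto simp: p_def)
    then have lt: "H s p < b" using strict_sublevel_eq_sigma_interval[OF s ne[OF s]] by blast
    have "((\<lambda>s. H s p) \<longlongrightarrow> H s p) (at s within {0..1})"
      using continuous_on_H_left s by (simp add: continuous_on_def)
    from order_tendstoD(2)[OF this lt]
    have "\<forall>\<^sub>F s' in at s within {0..1}. H s' p < b" .
    with near show ?thesis
    proof eventually_elim
      case (elim s')
      then have "p \<le> ?\<sigma> s'" using sublevel_eq_sigma_interval(1)[OF _ ne, of s'] by force
      moreover have "y < p" using that by (simp add: p_def)
      ultimately show "y < ?\<sigma> s'" by simp
    qed
  next
    case False
    have "?\<sigma> s \<in> {p. H s p \<le> b}" using level[OF s] by simp
    then have "?\<tau> s \<le> ?\<sigma> s" unfolding interval by simp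
    with False have "?\<tau> s = ?\<sigma> s" by simp
    then have "\<forall>p\<in>{-R..y}. b < H s p"
      using less_sigma_minus_imp_level_less[OF s ne[OF s]] that by auto
    then have "\<forall>\<^sub>F s' in at s within {0..1}. \<forall>p\<in>{-R..y}. b < H s' p"
      by (rule eventually_gt_on_compact[OF continuous s compact_Icc])
    with near show ?thesis
    proof eventually_elim
      case (elim s')
      show "y < ?\<sigma> s'"
      proof (rule ccontr)
        assume "\<not> y < ?\<sigma> s'"
        then have "?\<sigma> s' \<in> {-R..y}" using bound[OF elim(1)] by auto
        then show False using elim(2) level[OF elim(1)] by fastforce
      qed
    qed
  qed
qed

lemma quasiconvex_hamiltonian_reflect: "quasiconvex_hamiltonian (\<lambda>s p. H s (- p))"
proof unfold_locales
  have "continuous_on ({0..1} \<times> UNIV) (\<lambda>x. (\<lambda>(s, p). H s p) (fst x, - snd x))"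
    by (rule continuous_on_compose2[OF continuous]) (auto intro!: continuous_intros)
  then show "continuous_on ({0..1} \<times> UNIV) (\<lambda>(s, p). H s (- p))"
    by (simp add: case_prod_beta)
  show "coercive_H (\<lambda>s p. H s (- p))"
    using coercive unfolding coercive_H_def by (metis abs_minus_cancel)
  show "quasiconvex_H (\<lambda>s p. H s (- p))"
    using quasiconvex
    by (simp add: quasiconvex_H_def Collect_uminus_eq_image[of "\<lambda>p. H _ p \<le> _"] convex_negations)
  show "\<forall>s\<in>{0..1}. \<forall>b. interior {p. H s (- p) \<le> b} = {p. H s (- p) < b}"
    using interior_sublevel
    by (simp add: Collect_uminus_eq_image[of "\<lambda>p. H _ p \<le> _"]
        Collect_uminus_eq_image[of "\<lambda>p. H _ p < _"] interior_negations)
qed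

lemma continuous_on_sigma_minus:
  assumes ne: "\<And>s. s \<in> {0..1} \<Longrightarrow> \<exists>p. H s p \<le> b"
  shows "continuous_on {0..1} (sigma_minus H b)"
proof -
  interpret reflected: quasiconvex_hamiltonian "\<lambda>s p. H s (- p)"
    by (rule quasiconvex_hamiltonian_reflect)
  have "\<exists>p. H s (- p) \<le> b" if "s \<in> {0..1}" for s
    using ne[OF that] by (metis minus_minus)
  then have "continuous_on {0..1} (sigma_plus (\<lambda>s p. H s (- p)) b)"
    by (rule reflected.continuous_on_sigma_plus)
  then show ?thesis
    unfolding sigma_minus_eq_uminus_sigma_plus by (rule continuous_on_minus)
qed

lemma sigma_minus_eq_sigma_plus:
  assumes s: "s \<in> {0..1}" and "H s p = b" and above: "\<And>q. b \<le> H s q"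
  shows "sigma_minus H b s = sigma_plus H b s"
proof -
  have ne: "\<exists>p. H s p \<le> b" using assms(2) by auto
  have "{sigma_minus H b s<..<sigma_plus H b s} = {}"
    using strict_sublevel_eq_sigma_interval[OF s ne] above by (auto simp: not_less[symmetric])
  moreover have "sigma_minus H b s \<le> sigma_plus H b s"
    using sublevel_eq_sigma_interval[OF s ne] by fastforce
  ultimately show ?thesis using dense[of "sigma_minus H b s" "sigma_plus H b s"] by fastforce
qed

lemma integral_sigma_plus_nonneg:
  assumes ne: "\<And>s. s \<in> {0..1} \<Longrightarrow> \<exists>p. H s p \<le> c_H H"
  shows "0 \<le> integral {0..1} (sigma_plus H (c_H H))"
proof (rule field_le_epsilon)
  fix \<epsilon> :: real assume \<epsilon>: "0 < \<epsilon>"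
  let ?\<sigma> = "sigma_plus H (c_H H)"
  let ?f = "\<lambda>s. ?\<sigma> s + \<epsilon>"
  have \<sigma>: "continuous_on {0..1} ?\<sigma>" by (rule continuous_on_sigma_plus[OF ne])
  then have f: "continuous_on {0..1} ?f" by (intro continuous_intros)
  have above: "c_H H < H s p" if "s \<in> {0..1}" "?\<sigma> s < p" for s p
    using sigma_plus_less_imp_level_less[OF that(1) ne[OF that(1)] that(2)] .
  then have "\<forall>s\<in>{0..1}. c_H H < H s (?f s)" using \<epsilon> by simp
  then obtain a u where u: "periodic_subsol H a u" and a: "\<forall>s\<in>{0..1}. a < H s (?f s)"
    using periodic_subsol_below[OF f] by blast
  have "\<forall>r\<in>{0<..<1}. \<forall>q\<ge>?f r. a < H r q"
  proof (intro ballI allI impI)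
    fix r q assume "r \<in> {0<..<1}" and q: "?f r \<le> q"
    then have r: "r \<in> {0..1}" by simp
    have "H r (?f r) \<le> max (H r (?\<sigma> r)) (H r q)"
      using quasiconvex_le_max[OF r _ q] \<epsilon> by simp
    moreover have "H r (?\<sigma> r) = c_H H" by (rule sublevel_eq_sigma_interval(3)[OF r ne[OF r]])
    moreover have "c_H H < H r q" using above[OF r] q \<epsilon> by simp
    ultimately show "a < H r q" using a r by fastforce
  qed
  from periodic_subsol_integral_nonneg[OF u f this]
  have "0 \<le> integral {0..1} ?f" .
  also have "integral {0..1} ?f = integral {0..1} ?\<sigma> + \<epsilon>"
    using integral_add[OF integrable_continuous_interval[OF \<sigma>] integrable_const_ivl] by simp
  finally show "0 \<le> integral {0..1} ?\<sigma> + \<epsilon>" .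
qed

lemma integral_sigma_minus_nonpos:
  assumes ne: "\<And>s. s \<in> {0..1} \<Longrightarrow> \<exists>p. H s p \<le> c_H H"
  shows "integral {0..1} (sigma_minus H (c_H H)) \<le> 0"
proof (rule field_le_epsilon)
  fix \<epsilon> :: real assume \<epsilon>: "0 < \<epsilon>"
  let ?\<sigma> = "sigma_minus H (c_H H)"
  let ?f = "\<lambda>s. ?\<sigma> s - \<epsilon>"
  have \<sigma>: "continuous_on {0..1} ?\<sigma>" by (rule continuous_on_sigma_minus[OF ne])
  then have f: "continuous_on {0..1} ?f" by (intro continuous_intros)
  have below: "c_H H < H s p" if "s \<in> {0..1}" "p < ?\<sigma> s" for s p
    using less_sigma_minus_imp_level_less[OF that(1) ne[OF that(1)] that(2)] .
  then have "\<forall>s\<in>{0..1}. c_H H < H s (?f s)" using \<epsilon> by simp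
  then obtain a u where u: "periodic_subsol H a u" and a: "\<forall>s\<in>{0..1}. a < H s (?f s)"
    using periodic_subsol_below[OF f] by blast
  have "\<forall>r\<in>{0<..<1}. \<forall>q\<le>?f r. a < H r q"
  proof (intro ballI allI impI)
    fix r q assume "r \<in> {0<..<1}" and q: "q \<le> ?f r"
    then have r: "r \<in> {0..1}" by simp
    have "H r (?f r) \<le> max (H r q) (H r (?\<sigma> r))"
      using quasiconvex_le_max[OF r q] \<epsilon> by simp
    moreover have "H r (?\<sigma> r) = c_H H" by (rule sublevel_eq_sigma_interval(2)[OF r ne[OF r]])
    moreover have "c_H H < H r q" using below[OF r] q \<epsilon> by simp
    ultimately show "a < H r q" using a r by fastforce
  qed
  from periodic_subsol_integral_nonpos[OF u f this]
  have "integral {0..1} ?f \<le> 0" .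
  moreover have "integral {0..1} ?f = integral {0..1} ?\<sigma> - \<epsilon>"
    using integral_diff[OF integrable_continuous_interval[OF \<sigma>] integrable_const_ivl] by simp
  ultimately show "integral {0..1} ?\<sigma> \<le> 0 + \<epsilon>" by simp
qed

lemma integral_sigma_zero_if_strict:
  assumes strict: "\<forall>s\<in>{0..1}. \<exists>p. H s p < c_H H"
  shows "integral {0..1} (sigma_minus H (c_H H)) = 0 \<or> integral {0..1} (sigma_plus H (c_H H)) = 0"
proof (rule ccontr)
  let ?\<tau> = "sigma_minus H (c_H H)" and ?\<sigma> = "sigma_plus H (c_H H)"
  define Sm where "Sm = integral {0..1} ?\<tau>"
  define Sp where "Sp = integral {0..1} ?\<sigma>"
  have ne: "\<exists>p. H s p \<le> c_H H" if "s \<in> {0..1}" for s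
    using strict that by (meson less_imp_le)
  have \<tau>: "continuous_on {0..1} ?\<tau>" and \<sigma>: "continuous_on {0..1} ?\<sigma>"
    using continuous_on_sigma_minus continuous_on_sigma_plus ne by blast+
  assume "\<not> ?thesis"
  with integral_sigma_minus_nonpos[OF ne] integral_sigma_plus_nonneg[OF ne]
  have Sm: "Sm < 0" and Sp: "0 < Sp" by (auto simp: Sm_def Sp_def)
  define \<theta> where "\<theta> = - Sm / (Sp - Sm)"
  have \<theta>: "0 < \<theta>" "\<theta> < 1" using Sm Sp by (auto simp: \<theta>_def field_simps)
  define f where "f s = \<theta> * ?\<sigma> s + (1 - \<theta>) * ?\<tau> s" for s
  have f: "continuous_on {0..1} f" unfolding f_def by (intro continuous_intros \<sigma> \<tau>)
  have "(f has_integral \<theta> * Sp + (1 - \<theta>) * Sm) {0..1}"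
    unfolding f_def Sp_def Sm_def
    by (intro has_integral_add has_integral_mult_right integrable_integral
        integrable_continuous_interval \<sigma> \<tau>)
  moreover have "\<theta> * Sp + (1 - \<theta>) * Sm = 0" using Sm Sp by (simp add: \<theta>_def field_simps)
  ultimately have mean: "integral {0..1} f = 0" by (simp add: integral_unique)
  have "H s (f s) < c_H H" if s: "s \<in> {0..1}" for s
  proof -
    note strict_sublevel = strict_sublevel_eq_sigma_interval[OF s ne[OF s]]
    obtain p where "p \<in> {p. H s p < c_H H}" using strict s by blast
    then have "?\<tau> s < ?\<sigma> s" unfolding strict_sublevel by simp
    moreover have "f s - ?\<tau> s = \<theta> * (?\<sigma> s - ?\<tau> s)" "?\<sigma> s - f s = (1 - \<theta>) * (?\<sigma> s - ?\<tau> s)"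
      by (simp_all add: f_def algebra_simps)
    moreover have "0 < \<theta> * (?\<sigma> s - ?\<tau> s)" "0 < (1 - \<theta>) * (?\<sigma> s - ?\<tau> s)"
      using \<theta> calculation(1) by simp_all
    ultimately have "f s \<in> {?\<tau> s<..<?\<sigma> s}" by simp
    then show ?thesis using strict_sublevel by blast
  qed
  with c_H_le_zero_mean[OF f mean] show False by fastforce
qed

end

theorem proposition5p7:
  fixes H :: "real \<Rightarrow> real \<Rightarrow> real"
  assumes cont: "continuous_on ({0..1} \<times> UNIV) (\<lambda>(s, p). H s p)"
    and coer: "coercive_H H"
    and qconv: "quasiconvex_H H"
    and int_cond: "\<forall>s\<in>{0..1}. \<forall>b. interior {p. H s p \<le> b} = {p. H s p < b}"
    and alt: "c_H H > a_H H \<or> (\<exists>k. \<forall>s\<in>{0..1}. minH H s = k)"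
  shows "min (- integral {0..1} (sigma_minus H (c_H H))) (integral {0..1} (sigma_plus H (c_H H))) = 0"
proof -
  interpret quasiconvex_hamiltonian H
    using assms by unfold_locales
  let ?Sm = "integral {0..1} (sigma_minus H (c_H H))"
  let ?Sp = "integral {0..1} (sigma_plus H (c_H H))"
  have cases: "(\<forall>s\<in>{0..1}. \<exists>p. H s p < c_H H) \<or> (\<forall>s\<in>{0..1}. minH H s = c_H H)"
    using critical_level_dichotomy alt by blast
  have ne: "\<exists>p. H s p \<le> c_H H" if "s \<in> {0..1}" for s
    using cases that minH_attained by (metis less_imp_le order_refl)
  have "?Sm = 0 \<or> ?Sp = 0"
    using cases
  proof
    assume flat: "\<forall>s\<in>{0..1}. minH H s = c_H H"
    have "sigma_minus H (c_H H) s = sigma_plus H (c_H H) s" if s: "s \<in> {0..1}" for s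
      using minH_attained[OF s] flat s by (metis sigma_minus_eq_sigma_plus)
    then have "?Sm = ?Sp" by (rule integral_cong)
    with integral_sigma_minus_nonpos[OF ne] integral_sigma_plus_nonneg[OF ne] show ?thesis by simp
  qed (rule integral_sigma_zero_if_strict)
  with integral_sigma_minus_nonpos[OF ne] integral_sigma_plus_nonneg[OF ne]
  show ?thesis by (auto simp: min_def)
qed

end
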